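(* Suppose a group $G$ acts faithfully by order-preserving bijections on a totally ordered set $(\Omega,\le)$. Then the action has no crossings if and only if every left-ordering of $G$ induced from the action (with respect to any well-order on $\Omega$) is Conradian.
   Context: A crossing for the action is a 5-tuple $(f,g,u,v,w)$ with $f,g\in G$, $u,v,w\in\Omega$ such that: $u<w<v$; $g^nu<v$ and $f^nv>u$ for every $n\in\mathbb{N}$; and $f^Nv<w<g^Mu$ for some $M,N\in\mathbb{N}$. Given a well-order $\le^*$ on $\Omega$, the induced ordering $\preceq$ on $G$ is defined as follows: for $f\neq id$ let $w_f=\min_{\le^*}\{w\in\Omega: f(w)\neq w\}$, and declare $f\succ id$ iff $f(w_f)>w_f$; this is a left-ordering. A left-ordering is Conradian if for all $f\succ id$, $g\succ id$ there is $n\in\mathbb{N}$ with $fg^n\succ g$. *)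

theory Defs
  imports "HOL-Algebra.Group_Action"
begin

definition crossing :: "('g, 'b) monoid_scheme \<Rightarrow> ('g \<Rightarrow> 'a::linorder \<Rightarrow> 'a) \<Rightarrow> 'g \<Rightarrow> 'g \<Rightarrow> 'a \<Rightarrow> 'a \<Rightarrow> 'a \<Rightarrow> bool" where
  "crossing G \<phi> f g u v w \<longleftrightarrow>
     f \<in> carrier G \<and> g \<in> carrier G \<and> u < w \<and> w < v \<and>
     (\<forall>n::nat. \<phi> (g [^]\<^bsub>G\<^esub> n) u < v \<and> \<phi> (f [^]\<^bsub>G\<^esub> n) v > u) \<and>
     (\<exists>(M::nat) (N::nat). \<phi> (f [^]\<^bsub>G\<^esub> N) v < w \<and> w < \<phi> (g [^]\<^bsub>G\<^esub> M) u)"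

definition has_crossing :: "('g, 'b) monoid_scheme \<Rightarrow> ('g \<Rightarrow> 'a::linorder \<Rightarrow> 'a) \<Rightarrow> bool" where
  "has_crossing G \<phi> \<longleftrightarrow> (\<exists>f g u v w. crossing G \<phi> f g u v w)"

definition least_moved :: "('g \<Rightarrow> 'a \<Rightarrow> 'a) \<Rightarrow> 'a rel \<Rightarrow> 'g \<Rightarrow> 'a" where
  "least_moved \<phi> r f = (THE w. \<phi> f w \<noteq> w \<and> (\<forall>y. \<phi> f y \<noteq> y \<longrightarrow> (w, y) \<in> r))"

definition induced_pos :: "('g, 'b) monoid_scheme \<Rightarrow> ('g \<Rightarrow> 'a::linorder \<Rightarrow> 'a) \<Rightarrow> 'a rel \<Rightarrow> 'g \<Rightarrow> bool" where
  "induced_pos G \<phi> r f \<longleftrightarrow> f \<in> carrier G \<and> f \<noteq> \<one>\<^bsub>G\<^esub> \<and>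
     \<phi> f (least_moved \<phi> r f) > least_moved \<phi> r f"

definition induced_less :: "('g, 'b) monoid_scheme \<Rightarrow> ('g \<Rightarrow> 'a::linorder \<Rightarrow> 'a) \<Rightarrow> 'a rel \<Rightarrow> 'g \<Rightarrow> 'g \<Rightarrow> bool" where
  "induced_less G \<phi> r g f \<longleftrightarrow> g \<in> carrier G \<and> f \<in> carrier G \<and>
     induced_pos G \<phi> r (inv\<^bsub>G\<^esub> g \<otimes>\<^bsub>G\<^esub> f)"

definition conradian :: "('g, 'b) monoid_scheme \<Rightarrow> ('g \<Rightarrow> 'g \<Rightarrow> bool) \<Rightarrow> bool" where
  "conradian G lt \<longleftrightarrow>
     (\<forall>f\<in>carrier G. \<forall>g\<in>carrier G. lt \<one>\<^bsub>G\<^esub> f \<and> lt \<one>\<^bsub>G\<^esub> g \<longrightarrow>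
        (\<exists>n::nat. n \<ge> 1 \<and> lt g (f \<otimes>\<^bsub>G\<^esub> g [^]\<^bsub>G\<^esub> n)))"

end

theory Submission imports Defs begin

text \<open>
  For \<open>f, g \<succ> id\<close>, let \<open>m\<close> be the earlier (in the well-order) of \<open>w\<^sub>f\<close> and \<open>w\<^sub>g\<close>: every
  \<open>g\<^sup>-\<^sup>1 f g\<^sup>n\<close> fixes all points before \<open>m\<close>, so \<open>f g\<^sup>n \<succ> g\<close> is decided by whether
  \<open>g\<^sup>-\<^sup>1 f g\<^sup>n\<close> moves \<open>m\<close> up. If it never does, then \<open>f (g\<^sup>n m) \<le> g m\<close> for all \<open>n \<ge> 1\<close>.
  This is impossible if \<open>g\<close> fixes \<open>m\<close> (then \<open>f\<close> moves \<open>m\<close> up); otherwise the points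
  \<open>g\<^sup>n m\<close> increase, \<open>f\<close> pushes the whole \<open>g\<close>-orbit of \<open>m\<close> strictly below \<open>w = g m\<close>,
  and \<open>(f, g, m, f\<^sup>-\<^sup>1 w, w)\<close> is a crossing.

  Conversely, given a crossing \<open>(f, g, u, v, w)\<close>, use a well-order starting at \<open>w\<close>, so that
  an element is positive iff it moves \<open>w\<close> up. Then \<open>a = g\<^sup>M f\<^sup>N\<close> and \<open>b = g\<^sup>M\<close> are positive,
  but \<open>b\<^sup>-\<^sup>1 a b\<^sup>n\<close> acts on \<open>w\<close> as \<open>f\<^sup>N\<close> on \<open>b\<^sup>n w < v\<close>, sending it below \<open>w\<close>.
\<close>

context
  fixes r :: "'a rel"
  assumes wo: "Well_order r" and field: "Field r = UNIV"
begin

interpretation wo_rel r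
  using wo by (simp add: wo_rel_def)

lemma least_moved_eq_minim: "least_moved \<phi> r h = minim {y. \<phi> h y \<noteq> y}"
  by (simp add: least_moved_def minim_def isMinim_def)

lemma fixed_underS_least_moved:
  assumes "y \<in> underS (least_moved \<phi> r h)"
  shows "\<phi> h y = y"
proof (rule ccontr)
  assume "\<phi> h y \<noteq> y"
  then have "(minim {y. \<phi> h y \<noteq> y}, y) \<in> r"
    using field by (intro minim_least) auto
  moreover have "(y, minim {y. \<phi> h y \<noteq> y}) \<in> r" "y \<noteq> minim {y. \<phi> h y \<noteq> y}"
    using assms by (simp_all add: underS_def least_moved_eq_minim)
  ultimately show False
    using antisymD[OF ANTISYM] by blast
qed

lemma least_moved_eqI:
  assumes moved: "\<phi> h m \<noteq> m" and fixed: "\<forall>y \<in> underS m. \<phi> h y = y"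
  shows "least_moved \<phi> r h = m"
proof -
  have "(m, y) \<in> r" if "\<phi> h y \<noteq> y" for y
  proof (cases "y = m")
    case True
    then show ?thesis
      using REFL field by (simp add: refl_on_def)
  next
    case False
    then have "(y, m) \<notin> r"
      using fixed that unfolding underS_def by blast
    then show ?thesis
      using TOTALS field False by blast
  qed
  then have "m = minim {y. \<phi> h y \<noteq> y}"
    using field moved by (intro equals_minim) auto
  then show ?thesis
    by (simp add: least_moved_eq_minim)
qed

lemma least_moved_common_base:
  obtains m where "m = least_moved \<phi> r f \<or> m = least_moved \<phi> r g"
    and "m = least_moved \<phi> r f \<or> \<phi> f m = m" and "m = least_moved \<phi> r g \<or> \<phi> g m = m"
    and "\<forall>y \<in> underS m. \<phi> f y = y \<and> \<phi> g y = y"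
proof
  define p q where "p = least_moved \<phi> r f" and "q = least_moved \<phi> r g"
  let ?m = "minim {p, q}"
  have "(?m, p) \<in> r" "(?m, q) \<in> r"
    using field by (intro minim_least; simp)+
  then have below: "underS ?m \<subseteq> underS p" "underS ?m \<subseteq> underS q"
    using underS_incr[OF TRANS ANTISYM] by blast+
  show "?m = p \<or> ?m = q"
    using minim_in[of "{p, q}"] field by auto
  show "?m = p \<or> \<phi> f ?m = ?m" "?m = q \<or> \<phi> g ?m = ?m"
    using \<open>(?m, p) \<in> r\<close> \<open>(?m, q) \<in> r\<close>
      fixed_underS_least_moved[of ?m \<phi> f] fixed_underS_least_moved[of ?m \<phi> g]
    unfolding p_def q_def underS_def by auto
  show "\<forall>y \<in> underS ?m. \<phi> f y = y \<and> \<phi> g y = y"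
    using below fixed_underS_least_moved[of _ \<phi> f] fixed_underS_least_moved[of _ \<phi> g]
    unfolding p_def q_def by blast
qed

end

lemma obtain_Well_order_least:
  obtains r :: "'a rel" where "Well_order r" and "Field r = UNIV" and "underS r w = {}"
proof -
  obtain r0 :: "'a rel" where r0: "well_order_on UNIV r0"
    using well_order_on by blast
  define r where "r = {(x, y). x = w \<or> (y \<noteq> w \<and> (x, y) \<in> r0)}"
  have "linear_order_on UNIV r"
    using r0 unfolding r_def order_on_defs refl_on_def trans_def antisym_def total_on_def
    by auto
  moreover have "wf (r - Id)"
  proof (rule wf_subset)
    show "wf (inv_image (less_than <*lex*> (r0 - Id)) (\<lambda>x. (if x = w then 0::nat else 1, x)))"
      using r0 by (simp add: well_order_on_def wf_lex_prod)
    show "r - Id \<subseteq> inv_image (less_than <*lex*> (r0 - Id)) (\<lambda>x. (if x = w then 0 else 1, x))"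
      unfolding r_def by (auto split: if_splits)
  qed
  ultimately have "Well_order r" and "Field r = UNIV"
    using well_order_on_Well_order well_order_on_def by metis+
  moreover have "underS r w = {}"
    unfolding r_def underS_def by auto
  ultimately show ?thesis
    using that by blast
qed

locale order_preserving_action = group_action G "UNIV :: 'a::linorder set" \<phi>
  for G :: "('g, 'b) monoid_scheme" (structure) and \<phi> :: "'g \<Rightarrow> 'a::linorder \<Rightarrow> 'a" +
  assumes order_preserving: "g \<in> carrier G \<Longrightarrow> mono (\<phi> g)"
begin

sublocale group G
  using group_hom group_hom.axioms(1) by blast

lemma action_mult [simp]:
  "g \<in> carrier G \<Longrightarrow> h \<in> carrier G \<Longrightarrow> \<phi> (g \<otimes> h) x = \<phi> g (\<phi> h x)"
  using composition_rule by blast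

lemma action_one [simp]: "\<phi> \<one> x = x"
  using fun_cong[OF id_eq_one, of x] by simp

lemma action_inv_cancel [simp]: "g \<in> carrier G \<Longrightarrow> \<phi> (inv g) (\<phi> g x) = x"
  using orbit_sym_aux by blast

lemma action_cancel_inv [simp]: "g \<in> carrier G \<Longrightarrow> \<phi> g (\<phi> (inv g) x) = x"
  using orbit_sym_aux[of "inv g" x] by simp

lemma strict_mono_action: "g \<in> carrier G \<Longrightarrow> strict_mono (\<phi> g)"
  using order_preserving inj_prop by (simp add: strict_mono_iff_mono)

lemma action_less_iff [simp]: "g \<in> carrier G \<Longrightarrow> \<phi> g x < \<phi> g y \<longleftrightarrow> x < y"
  using strict_mono_action strict_mono_less by blast

lemma action_le_iff [simp]: "g \<in> carrier G \<Longrightarrow> \<phi> g x \<le> \<phi> g y \<longleftrightarrow> x \<le> y"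
  using strict_mono_action strict_mono_less_eq by blast

lemma action_pow_add:
  "g \<in> carrier G \<Longrightarrow> \<phi> (g [^] (k + n :: nat)) x = \<phi> (g [^] k) (\<phi> (g [^] n) x)"
  by (simp flip: nat_pow_mult)

lemma action_pow_fixed: "g \<in> carrier G \<Longrightarrow> \<phi> g y = y \<Longrightarrow> \<phi> (g [^] (n :: nat)) y = y"
  by (induction n) simp_all

lemma le_action_pow: "g \<in> carrier G \<Longrightarrow> x \<le> \<phi> g x \<Longrightarrow> x \<le> \<phi> (g [^] (n :: nat)) x"
  by (induction n) (auto intro: order.trans)

lemma strict_mono_orbit:
  assumes "g \<in> carrier G" and "x < \<phi> g x"
  shows "strict_mono (\<lambda>n :: nat. \<phi> (g [^] n) x)"
  using assms by (simp add: strict_mono_Suc_iff)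

lemma induced_pos_iff:
  assumes "Well_order r" and "Field r = UNIV" and "h \<in> carrier G"
    and moved: "\<phi> h m \<noteq> m" and "\<forall>y \<in> underS r m. \<phi> h y = y"
  shows "induced_pos G \<phi> r h \<longleftrightarrow> m < \<phi> h m"
proof -
  have "least_moved \<phi> r h = m"
    using least_moved_eqI[where \<phi> = \<phi>, OF assms(1,2) moved assms(5)] .
  moreover have "h \<noteq> \<one>"
    using moved by auto
  ultimately show ?thesis
    using assms(3) by (simp add: induced_pos_def)
qed

lemma dominated_if_not_induced_less:
  assumes wo: "Well_order r" "Field r = UNIV" and f: "f \<in> carrier G" and g: "g \<in> carrier G"
    and fixed: "\<forall>y \<in> underS r m. \<phi> f y = y \<and> \<phi> g y = y"
    and not_less: "\<not> induced_less G \<phi> r g (f \<otimes> g [^] (n :: nat))"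
  shows "\<phi> f (\<phi> (g [^] n) m) \<le> \<phi> g m"
proof -
  define h where "h = inv g \<otimes> (f \<otimes> g [^] n)"
  have h: "h \<in> carrier G"
    unfolding h_def using f g by simp
  have "\<phi> h y = y" if "y \<in> underS r m" for y
  proof -
    have "\<phi> g y = y" "\<phi> f y = y"
      using fixed that by simp_all
    moreover from this(1) have "\<phi> (inv g) y = y"
      using action_inv_cancel[OF g, of y] by simp
    ultimately show ?thesis
      unfolding h_def using f g by (simp add: action_pow_fixed)
  qed
  moreover have "\<not> induced_pos G \<phi> r h"
    using not_less f g unfolding induced_less_def h_def by simp
  ultimately have "\<phi> h m \<le> m"
    using induced_pos_iff[OF wo h, of m] by (cases "\<phi> h m = m") auto
  then have "\<phi> g (\<phi> h m) \<le> \<phi> g m"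
    using g by simp
  then show ?thesis
    unfolding h_def using f g by simp
qed

lemma crossing_of_dominated_orbit:
  assumes f: "f \<in> carrier G" and g: "g \<in> carrier G"
    and f_m: "m \<le> \<phi> f m" and g_m: "m < \<phi> g m"
    and dominated: "\<forall>n \<ge> 1. \<phi> f (\<phi> (g [^] (n :: nat)) m) \<le> \<phi> g m"
  shows "crossing G \<phi> f g m (\<phi> (inv f) (\<phi> g m)) (\<phi> g m)"
proof -
  define w where "w = \<phi> g m"
  define v where "v = \<phi> (inv f) w"
  have orbit_mono: "strict_mono (\<lambda>n :: nat. \<phi> (g [^] n) m)"
    using strict_mono_orbit[OF g g_m] .
  have strictly_dominated: "\<phi> f (\<phi> (g [^] n) m) < w" for n :: nat
  proof -
    have "\<phi> f (\<phi> (g [^] n) m) < \<phi> f (\<phi> (g [^] Suc n) m)"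
      using f strict_monoD[OF orbit_mono, of n "Suc n"] by simp
    also have "\<dots> \<le> w"
      unfolding w_def by (rule dominated[rule_format]) simp
    finally show ?thesis .
  qed
  have fv: "\<phi> f v = w"
    unfolding v_def using f by simp
  have fw: "\<phi> f w < w"
    using strictly_dominated[of 1] g by (simp add: w_def)
  have mw: "m < w"
    using g_m by (simp add: w_def)
  have wv: "w < v"
    using fw fv f action_less_iff by metis
  have orbit_below: "\<phi> (g [^] n) m < v" for n :: nat
    using strictly_dominated[of n] f by (simp flip: fv)
  have f_pow_v: "m < \<phi> (f [^] n) v" for n :: nat
  proof (cases n)
    case 0
    then show ?thesis
      using mw wv by simp
  next
    case (Suc k)
    have "m \<le> \<phi> (f [^] k) m"
      using le_action_pow[OF f f_m] .
    also have "\<dots> < \<phi> (f [^] k) w"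
      using f mw by simp
    finally show ?thesis
      using f Suc by (simp add: fv)
  qed
  have "\<phi> (f [^] (2 :: nat)) v < w"
    using f fv fw by (simp add: numeral_2_eq_2)
  moreover have "w < \<phi> (g [^] (2 :: nat)) m"
    using strict_monoD[OF orbit_mono, of 1 2] g by (simp add: w_def)
  ultimately show ?thesis
    unfolding crossing_def w_def[symmetric] v_def[symmetric]
    using f g mw wv orbit_below f_pow_v by blast
qed

lemma conradian_if_no_crossing:
  assumes wo: "Well_order r" "Field r = UNIV" and no_crossing: "\<not> has_crossing G \<phi>"
  shows "conradian G (induced_less G \<phi> r)"
  unfolding conradian_def
proof (intro ballI impI)
  fix f g
  assume f: "f \<in> carrier G" and g: "g \<in> carrier G"
    and "induced_less G \<phi> r \<one> f \<and> induced_less G \<phi> r \<one> g"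
  then have f_up: "least_moved \<phi> r f < \<phi> f (least_moved \<phi> r f)"
    and g_up: "least_moved \<phi> r g < \<phi> g (least_moved \<phi> r g)"
    by (simp_all add: induced_less_def induced_pos_def)
  obtain m where "m = least_moved \<phi> r f \<or> m = least_moved \<phi> r g"
    and "m = least_moved \<phi> r f \<or> \<phi> f m = m" and "m = least_moved \<phi> r g \<or> \<phi> g m = m"
    and fixed: "\<forall>y \<in> underS r m. \<phi> f y = y \<and> \<phi> g y = y"
    using least_moved_common_base[OF wo, of \<phi> f g] by blast
  then have f_m: "m \<le> \<phi> f m" and g_m: "m \<le> \<phi> g m" and up: "m < \<phi> f m \<or> m < \<phi> g m"
    using f_up g_up by auto
  show "\<exists>n :: nat \<ge> 1. induced_less G \<phi> r g (f \<otimes> g [^] n)"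
  proof (rule ccontr)
    assume "\<not> (\<exists>n :: nat \<ge> 1. induced_less G \<phi> r g (f \<otimes> g [^] n))"
    then have dominated: "\<forall>n \<ge> 1. \<phi> f (\<phi> (g [^] (n :: nat)) m) \<le> \<phi> g m"
      using dominated_if_not_induced_less[OF wo f g fixed] by blast
    show False
    proof (cases "\<phi> g m = m")
      case True
      then show False
        using dominated[rule_format, of 1] up g by simp
    next
      case False
      then have "crossing G \<phi> f g m (\<phi> (inv f) (\<phi> g m)) (\<phi> g m)"
        using crossing_of_dominated_orbit[OF f g f_m _ dominated] g_m by simp
      then show False
        using no_crossing unfolding has_crossing_def by blast
    qed
  qed
qed

lemma crossing_orbit_below:
  assumes "crossing G \<phi> f g u v w"
  shows "\<phi> (g [^] (k :: nat)) w < v"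
proof -
  obtain M :: nat where g: "g \<in> carrier G" and "w < \<phi> (g [^] M) u"
    and below: "\<forall>n :: nat. \<phi> (g [^] n) u < v"
    using assms unfolding crossing_def by blast
  then have "\<phi> (g [^] k) w < \<phi> (g [^] k) (\<phi> (g [^] M) u)"
    by simp
  also have "\<dots> = \<phi> (g [^] (k + M)) u"
    using g by (simp add: action_pow_add)
  also have "\<dots> < v"
    using below by blast
  finally show ?thesis .
qed

lemma not_conradian_if_crossing:
  assumes cross: "crossing G \<phi> f g u v w"
    and wo: "Well_order r" "Field r = UNIV" and w_least: "underS r w = {}"
  shows "\<not> conradian G (induced_less G \<phi> r)"
proof
  assume conradian: "conradian G (induced_less G \<phi> r)"
  obtain M N :: nat where f: "f \<in> carrier G" and g: "g \<in> carrier G" and uw: "u < w"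
    and f_above: "\<forall>n :: nat. u < \<phi> (f [^] n) v"
    and fN: "\<phi> (f [^] N) v < w" and gM: "w < \<phi> (g [^] M) u"
    using cross unfolding crossing_def by blast
  have pos_iff: "induced_pos G \<phi> r h \<longleftrightarrow> w < \<phi> h w" if "h \<in> carrier G" "\<phi> h w \<noteq> w" for h
    using induced_pos_iff[OF wo that] w_least by simp
  define a b where "a = g [^] M \<otimes> f [^] N" and "b = g [^] M"
  have a: "a \<in> carrier G" and b: "b \<in> carrier G"
    unfolding a_def b_def using f g by simp_all
  have "u < \<phi> (f [^] N) w"
  proof -
    have "u < \<phi> (f [^] (N + N)) v"
      using f_above by blast
    also have "\<dots> < \<phi> (f [^] N) w"
      using f fN by (simp add: action_pow_add)
    finally show ?thesis .
  qed
  then have "w < \<phi> a w"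
    using gM g f unfolding a_def by (simp add: order.strict_trans)
  then have "induced_less G \<phi> r \<one> a"
    using a pos_iff[OF a] by (simp add: induced_less_def)
  moreover have "w < \<phi> b w"
    using gM g uw unfolding b_def by (simp add: order.strict_trans)
  then have "induced_less G \<phi> r \<one> b"
    using b pos_iff[OF b] by (simp add: induced_less_def)
  ultimately obtain n :: nat where "induced_less G \<phi> r b (a \<otimes> b [^] n)"
    using conradian a b unfolding conradian_def by blast
  then have "induced_pos G \<phi> r (inv b \<otimes> (a \<otimes> b [^] n))"
    by (simp add: induced_less_def)
  moreover have "\<phi> (inv b \<otimes> (a \<otimes> b [^] n)) w < w"
  proof -
    have "\<phi> (inv b \<otimes> (a \<otimes> b [^] n)) w = \<phi> (f [^] N) (\<phi> (g [^] (M * n)) w)"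
      unfolding a_def b_def using f g by (simp add: nat_pow_pow)
    also have "\<dots> < \<phi> (f [^] N) v"
      using f crossing_orbit_below[OF cross] by simp
    finally show ?thesis
      using fN by simp
  qed
  moreover have "inv b \<otimes> (a \<otimes> b [^] n) \<in> carrier G"
    using a b by simp
  ultimately show False
    using pos_iff less_asym by metis
qed

end

theorem mainTheorem17:
  fixes G :: "('g, 'b) monoid_scheme" and \<phi> :: "'g \<Rightarrow> 'a::linorder \<Rightarrow> 'a"
  assumes "group_action G UNIV \<phi>"
    and "inj_on \<phi> (carrier G)"
    and "\<forall>g\<in>carrier G. mono (\<phi> g)"
  shows "\<not> has_crossing G \<phi> \<longleftrightarrow>
    (\<forall>r :: 'a rel. Well_order r \<and> Field r = UNIV \<longrightarrow> conradian G (induced_less G \<phi> r))"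
proof -
  interpret order_preserving_action G \<phi>
    using assms(1,3) by (simp add: order_preserving_action_def order_preserving_action_axioms_def)
  show ?thesis
  proof
    show "\<forall>r. Well_order r \<and> Field r = UNIV \<longrightarrow> conradian G (induced_less G \<phi> r)"
      if "\<not> has_crossing G \<phi>"
      using conradian_if_no_crossing[OF _ _ that] by (intro allI impI) (elim conjE)
  next
    assume all_conradian: "\<forall>r. Well_order r \<and> Field r = UNIV \<longrightarrow> conradian G (induced_less G \<phi> r)"
    show "\<not> has_crossing G \<phi>"
    proof
      assume "has_crossing G \<phi>"
      then obtain f g u v w where cross: "crossing G \<phi> f g u v w"
        unfolding has_crossing_def by blast
      obtain r :: "'a rel" where wo: "Well_order r" "Field r = UNIV" and "underS r w = {}"
        by (rule obtain_Well_order_least)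
      then have "\<not> conradian G (induced_less G \<phi> r)"
        by (rule not_conradian_if_crossing[OF cross])
      with all_conradian wo show False
        by simp
    qed
  qed
qed

end
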